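(* Let $u:\mathbb T_n^d\to(0,1)$, $\mu=\bigotimes_{x\in\mathbb T^d_n}\mathrm{Bern}(u_x)$ on $\Omega_n=\{0,1\}^{\mathbb T_n^d}$, let $f:\Omega_n\to[0,\infty)$ be a density with respect to $\mu$, let $x,y\in\mathbb T_n^d$, and let $h:\Omega_n\to\mathbb R$ satisfy $h(\eta^{x,y})=h(\eta)$ for all $\eta$. Then \[ \int h(\omega_y-\omega_x)f\,d\mu=\int h\,s_{x,y}\,\nabla_{x,y}f\,d\mu-(u_y-u_x)\int h\,\omega_x\omega_y f\,d\mu, \] where $s_{x,y}=\dfrac{\eta_x(1-\eta_y)}{u_x(1-u_y)}$.
   Context: $\mathbb T_n^d=\mathbb Z^d/n\mathbb Z^d$; $\eta^{x,y}$ is the configuration obtained from $\eta$ by exchanging the values $\eta_x,\eta_y$; $\nabla_{x,y}f(\eta)=f(\eta^{x,y})-f(\eta)$; $\omega_x=(\eta_x-u_x)/(u_x(1-u_x))$; a density means $\int f\,d\mu=1$. *)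

theory Defs
  imports Complex_Main
begin

text \<open>Discrete torus T_n^d: points are vectors v with coordinates 0 <= v i < n for i < d,
  and v i = 0 for i >= d (canonical representatives of Z^d / nZ^d).\<close>
definition torus :: "nat \<Rightarrow> nat \<Rightarrow> (nat \<Rightarrow> nat) set" where
  "torus n d = {v. (\<forall>i<d. v i < n) \<and> (\<forall>i. d \<le> i \<longrightarrow> v i = 0)}"

definition configs :: "'s set \<Rightarrow> ('s \<Rightarrow> real) set" where
  "configs S = {\<eta>. (\<forall>z\<in>S. \<eta> z \<in> {0, 1}) \<and> (\<forall>z. z \<notin> S \<longrightarrow> \<eta> z = 0)}"

definition bern_weight :: "('s \<Rightarrow> real) \<Rightarrow> 's set \<Rightarrow> ('s \<Rightarrow> real) \<Rightarrow> real" where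
  "bern_weight u S \<eta> = (\<Prod>z\<in>S. if \<eta> z = 1 then u z else 1 - u z)"

definition bern_integral :: "('s \<Rightarrow> real) \<Rightarrow> 's set \<Rightarrow> (('s \<Rightarrow> real) \<Rightarrow> real) \<Rightarrow> real" where
  "bern_integral u S F = (\<Sum>\<eta>\<in>configs S. bern_weight u S \<eta> * F \<eta>)"

definition swap_conf :: "('s \<Rightarrow> real) \<Rightarrow> 's \<Rightarrow> 's \<Rightarrow> ('s \<Rightarrow> real)" where
  "swap_conf \<eta> x y = \<eta>(x := \<eta> y, y := \<eta> x)"

definition grad :: "'s \<Rightarrow> 's \<Rightarrow> (('s \<Rightarrow> real) \<Rightarrow> real) \<Rightarrow> ('s \<Rightarrow> real) \<Rightarrow> real" where
  "grad x y f \<eta> = f (swap_conf \<eta> x y) - f \<eta>"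

definition omega :: "('s \<Rightarrow> real) \<Rightarrow> 's \<Rightarrow> ('s \<Rightarrow> real) \<Rightarrow> real" where
  "omega u x \<eta> = (\<eta> x - u x) / (u x * (1 - u x))"

definition s_xy :: "('s \<Rightarrow> real) \<Rightarrow> 's \<Rightarrow> 's \<Rightarrow> ('s \<Rightarrow> real) \<Rightarrow> real" where
  "s_xy u x y \<eta> = \<eta> x * (1 - \<eta> y) / (u x * (1 - u y))"

end

theory Submission
  imports Defs
begin

text \<open>Reindexing the sum over configurations by \<open>\<eta> \<mapsto> \<eta>^{x,y}\<close> and using the
  detailed balance relation \<open>\<mu>(\<eta>^{x,y}) s_{x,y}(\<eta>^{x,y}) = \<mu>(\<eta>) s_{y,x}(\<eta>)\<close> turns
  \<open>\<integral> h s_{x,y} \<nabla>_{x,y} f d\<mu>\<close> into \<open>\<integral> h (s_{y,x} - s_{x,y}) f d\<mu>\<close>, because \<open>h\<close> is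
  exchange invariant. The theorem then follows from the pointwise identity
  \<open>\<omega>_y - \<omega>_x = s_{y,x} - s_{x,y} - (u_y - u_x) \<omega>_x \<omega>_y\<close>, checked on the four values of
  \<open>(\<eta>_x, \<eta>_y)\<close>.\<close>

lemma finite_torus: "finite (torus n d)"
  by (rule finite_subset[OF _ finite_set_of_finite_funs[of "{..<d}" "{..<n}" 0]])
     (auto simp: torus_def)

lemma configs_value:
  "\<eta> \<in> configs S \<Longrightarrow> z \<in> S \<Longrightarrow> \<eta> z \<in> {0, 1}"
  by (simp add: configs_def)

lemma swap_conf_in_configs:
  "\<eta> \<in> configs S \<Longrightarrow> x \<in> S \<Longrightarrow> y \<in> S \<Longrightarrow> swap_conf \<eta> x y \<in> configs S"
  by (auto simp: configs_def swap_conf_def)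

lemma swap_conf_swap_conf [simp]: "swap_conf (swap_conf \<eta> x y) x y = \<eta>"
  by (auto simp: swap_conf_def)

lemma sum_configs_swap_conf:
  assumes "x \<in> S" "y \<in> S"
  shows "(\<Sum>\<eta>\<in>configs S. g (swap_conf \<eta> x y)) = (\<Sum>\<eta>\<in>configs S. g \<eta>)"
proof -
  have "bij_betw (\<lambda>\<eta>. swap_conf \<eta> x y) (configs S) (configs S)"
    by (rule bij_betw_byWitness[where f' = "\<lambda>\<eta>. swap_conf \<eta> x y"])
       (auto simp: swap_conf_in_configs assms)
  then show ?thesis
    by (rule sum.reindex_bij_betw)
qed

lemma bern_weight_eq_remove2:
  assumes "finite S" "x \<in> S" "y \<in> S" "x \<noteq> y"
  shows "bern_weight u S \<eta> = (if \<eta> x = 1 then u x else 1 - u x) * (if \<eta> y = 1 then u y else 1 - u y)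
     * (\<Prod>z\<in>S - {x, y}. if \<eta> z = 1 then u z else 1 - u z)"
  using assms unfolding bern_weight_def
  by (simp add: prod.remove[of S x] prod.remove[of "S - {x}" y] Diff_insert2 [symmetric] mult.assoc)

lemma bern_weight_swap_conf_detailed_balance:
  assumes "finite S" "x \<in> S" "y \<in> S" "\<eta> \<in> configs S"
    and "u x \<notin> {0, 1}" "u y \<notin> {0, 1}"
  shows "bern_weight u S (swap_conf \<eta> x y) * s_xy u x y (swap_conf \<eta> x y)
       = bern_weight u S \<eta> * s_xy u y x \<eta>"
proof (cases "x = y")
  case True
  have "\<eta> x \<in> {0, 1}"
    by (rule configs_value[OF assms(4,2)])
  then show ?thesis
    using True by (auto simp: s_xy_def swap_conf_def)
next
  case False
  have "\<eta> x \<in> {0, 1}" "\<eta> y \<in> {0, 1}"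
    using configs_value[OF assms(4)] assms(2,3) by auto
  moreover have "(\<Prod>z\<in>S - {x, y}. if swap_conf \<eta> x y z = 1 then u z else 1 - u z)
      = (\<Prod>z\<in>S - {x, y}. if \<eta> z = 1 then u z else 1 - u z)"
    by (rule prod.cong) (auto simp: swap_conf_def)
  ultimately show ?thesis
    using assms(5,6)
    unfolding bern_weight_eq_remove2[OF assms(1-3) False]
    by (auto simp: s_xy_def swap_conf_def)
qed

lemma bern_integral_cong:
  "(\<And>\<eta>. \<eta> \<in> configs S \<Longrightarrow> F \<eta> = G \<eta>) \<Longrightarrow> bern_integral u S F = bern_integral u S G"
  by (simp add: bern_integral_def)

lemma bern_integral_diff:
  "bern_integral u S (\<lambda>\<eta>. F \<eta> - G \<eta>) = bern_integral u S F - bern_integral u S G"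
  by (simp add: bern_integral_def right_diff_distrib sum_subtractf)

lemma bern_integral_mult_left:
  "bern_integral u S (\<lambda>\<eta>. c * F \<eta>) = c * bern_integral u S F"
  by (simp add: bern_integral_def sum_distrib_left mult.left_commute)

lemma bern_integral_s_xy_grad:
  assumes "finite S" "x \<in> S" "y \<in> S" "u x \<notin> {0, 1}" "u y \<notin> {0, 1}"
    and h_swap: "\<forall>\<eta>\<in>configs S. h (swap_conf \<eta> x y) = h \<eta>"
  shows "bern_integral u S (\<lambda>\<eta>. h \<eta> * s_xy u x y \<eta> * grad x y f \<eta>)
       = bern_integral u S (\<lambda>\<eta>. h \<eta> * (s_xy u y x \<eta> - s_xy u x y \<eta>) * f \<eta>)"
proof -
  let ?w = "bern_weight u S" and ?\<sigma> = "\<lambda>\<eta>. swap_conf \<eta> x y"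
  have "bern_integral u S (\<lambda>\<eta>. h \<eta> * s_xy u x y \<eta> * f (?\<sigma> \<eta>))
      = (\<Sum>\<eta>\<in>configs S. ?w (?\<sigma> \<eta>) * (h (?\<sigma> \<eta>) * s_xy u x y (?\<sigma> \<eta>) * f \<eta>))"
    using sum_configs_swap_conf[OF assms(2,3),
        of "\<lambda>\<eta>. ?w (?\<sigma> \<eta>) * (h (?\<sigma> \<eta>) * s_xy u x y (?\<sigma> \<eta>) * f \<eta>)"]
    by (simp add: bern_integral_def)
  also have "\<dots> = bern_integral u S (\<lambda>\<eta>. h \<eta> * s_xy u y x \<eta> * f \<eta>)"
    unfolding bern_integral_def
  proof (rule sum.cong[OF refl])
    fix \<eta> assume \<eta>: "\<eta> \<in> configs S"
    have "?w (?\<sigma> \<eta>) * s_xy u x y (?\<sigma> \<eta>) = ?w \<eta> * s_xy u y x \<eta>"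
      by (rule bern_weight_swap_conf_detailed_balance[OF assms(1-3) \<eta> assms(4,5)])
    moreover have "h (?\<sigma> \<eta>) = h \<eta>"
      using h_swap \<eta> by blast
    ultimately show "?w (?\<sigma> \<eta>) * (h (?\<sigma> \<eta>) * s_xy u x y (?\<sigma> \<eta>) * f \<eta>)
        = ?w \<eta> * (h \<eta> * s_xy u y x \<eta> * f \<eta>)"
      by (metis mult.assoc mult.commute)
  qed
  finally show ?thesis
    by (simp add: grad_def right_diff_distrib left_diff_distrib bern_integral_diff)
qed

lemma omega_diff_eq_s_xy:
  assumes "\<eta> x \<in> {0, 1}" "\<eta> y \<in> {0, 1}" "u x \<notin> {0, 1}" "u y \<notin> {0, 1}"
  shows "omega u y \<eta> - omega u x \<eta>
       = s_xy u y x \<eta> - s_xy u x y \<eta> - (u y - u x) * (omega u x \<eta> * omega u y \<eta>)"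
proof -
  define r s where "r = 1 - u x" and "s = 1 - u y"
  have nz: "u x \<noteq> 0" "r \<noteq> 0" "u y \<noteq> 0" "s \<noteq> 0"
    using assms(3,4) by (auto simp: r_def s_def)
  have rs: "u x + r = 1" "u y + s = 1"
    by (simp_all add: r_def s_def)
  from assms(1,2) show ?thesis
    unfolding omega_def s_xy_def r_def[symmetric] s_def[symmetric]
    by (elim insertE emptyE; simp add: nz field_simps; use rs in algebra)
qed

theorem lemmaE1:
  fixes n d :: nat and u :: "(nat \<Rightarrow> nat) \<Rightarrow> real"
    and f h :: "((nat \<Rightarrow> nat) \<Rightarrow> real) \<Rightarrow> real" and x y :: "nat \<Rightarrow> nat"
  assumes "n \<ge> 1"
    and "\<forall>z\<in>torus n d. 0 < u z \<and> u z < 1"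
    and "\<forall>\<eta>\<in>configs (torus n d). f \<eta> \<ge> 0"
    and "bern_integral u (torus n d) f = 1"
    and "x \<in> torus n d" and "y \<in> torus n d"
    and "\<forall>\<eta>\<in>configs (torus n d). h (swap_conf \<eta> x y) = h \<eta>"
  shows "bern_integral u (torus n d) (\<lambda>\<eta>. h \<eta> * (omega u y \<eta> - omega u x \<eta>) * f \<eta>)
       = bern_integral u (torus n d) (\<lambda>\<eta>. h \<eta> * s_xy u x y \<eta> * grad x y f \<eta>)
         - (u y - u x) * bern_integral u (torus n d) (\<lambda>\<eta>. h \<eta> * omega u x \<eta> * omega u y \<eta> * f \<eta>)"
proof -
  let ?S = "torus n d"
  have u_01: "u x \<notin> {0, 1}" "u y \<notin> {0, 1}"
    using assms(2,5,6) by fastforce+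
  have "bern_integral u ?S (\<lambda>\<eta>. h \<eta> * (omega u y \<eta> - omega u x \<eta>) * f \<eta>)
      = bern_integral u ?S (\<lambda>\<eta>. h \<eta> * (s_xy u y x \<eta> - s_xy u x y \<eta>) * f \<eta>
          - (u y - u x) * (h \<eta> * omega u x \<eta> * omega u y \<eta> * f \<eta>))"
  proof (rule bern_integral_cong)
    fix \<eta> assume \<eta>: "\<eta> \<in> configs ?S"
    have omega_eq: "omega u y \<eta> - omega u x \<eta>
        = s_xy u y x \<eta> - s_xy u x y \<eta> - (u y - u x) * (omega u x \<eta> * omega u y \<eta>)"
      using configs_value[OF \<eta> assms(5)] configs_value[OF \<eta> assms(6)] u_01
      by (rule omega_diff_eq_s_xy[of \<eta> x y u])
    show "h \<eta> * (omega u y \<eta> - omega u x \<eta>) * f \<eta>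
        = h \<eta> * (s_xy u y x \<eta> - s_xy u x y \<eta>) * f \<eta>
          - (u y - u x) * (h \<eta> * omega u x \<eta> * omega u y \<eta> * f \<eta>)"
      unfolding omega_eq by (simp add: algebra_simps)
  qed
  then show ?thesis
    using bern_integral_s_xy_grad[OF finite_torus assms(5,6) u_01 assms(7)]
    by (simp add: bern_integral_diff bern_integral_mult_left)
qed

end
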